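(* Let $B=XCX^T$ where $X$ is a real non-singular $n\times n$ matrix and $C$ is a real symmetric $n\times n$ matrix, and let $\Pi$ be the orthogonal projection onto the column space of $B$. Then \[ B^{+}=\Pi X^{-T}C^{+}X^{-1}\Pi. \]
   Context: $M^{+}$ denotes the Moore–Penrose pseudo-inverse of $M$, and $X^{-T}=(X^{-1})^T$. *)

theory Defs
  imports "HOL-Analysis.Analysis"
begin

definition is_mp_inverse :: "real^'n^'m \<Rightarrow> real^'m^'n \<Rightarrow> bool" where
  "is_mp_inverse M G \<longleftrightarrow>
     M ** G ** M = M \<and> G ** M ** G = G \<and>
     transpose (M ** G) = M ** G \<and> transpose (G ** M) = G ** M"

definition mp_pinv :: "real^'n^'m \<Rightarrow> real^'m^'n" where
  "mp_pinv M = (THE G. is_mp_inverse M G)"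

definition col_space :: "real^'n^'m \<Rightarrow> (real^'m) set" where
  "col_space M = range (\<lambda>x. M *v x)"

definition orth_proj_matrix :: "(real^'n) set \<Rightarrow> real^'n^'n" where
  "orth_proj_matrix S = (THE P. \<forall>x. P *v x \<in> S \<and> (\<forall>y\<in>S. (x - P *v x) \<bullet> y = 0))"

end

theory Submission
  imports Defs
begin

text \<open>
  Let \<open>P\<close> project onto the column space of \<open>B\<close>, so that \<open>P B = B = B P\<close>, and put
  \<open>G = P X^-T C^+ X^-1 P\<close>.  Then \<open>B G B = X C C^+ C X^T = B\<close> and \<open>G P = G = P G\<close>.  This
  suffices: a generalized inverse \<open>G\<close> of \<open>M\<close> (\<open>M G M = M\<close>) that is absorbed by the
  projections onto the column spaces of \<open>M\<close> and \<open>M^T\<close> is the Moore-Penrose inverse, because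
  \<open>M G\<close> is the identity on the column space of \<open>M\<close> and factors through its projection, hence
  equals it, and dually for \<open>G M\<close>.  As \<open>B\<close> is symmetric, both column spaces are the same.
\<close>

lemma transpose_matrix_vector_mul_inner:
  fixes A :: "real^'n^'m"
  shows "(transpose A *v x) \<bullet> y = x \<bullet> (A *v y)"
  by (metis dot_lmul_matrix transpose_matrix_vector)

lemma invertible_matrix_inv:
  assumes "invertible A"
  shows "A ** matrix_inv A = mat 1" "matrix_inv A ** A = mat 1"
  using assms someI_ex[of "\<lambda>A'. A ** A' = mat 1 \<and> A' ** A = mat 1"]
  unfolding matrix_inv_def invertible_def by auto

lemma subspace_col_space: "subspace (col_space M)"
  unfolding col_space_def by (rule linear_subspace_image) auto

definition is_orth_proj :: "(real^'n) set \<Rightarrow> real^'n^'n \<Rightarrow> bool" where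
  "is_orth_proj S P \<longleftrightarrow> (\<forall>x. P *v x \<in> S \<and> (\<forall>y\<in>S. (x - P *v x) \<bullet> y = 0))"

lemma orth_proj_point_unique:
  fixes S :: "(real^'n) set"
  assumes "subspace S" "y1 \<in> S" "y2 \<in> S"
    and "\<forall>w\<in>S. (x - y1) \<bullet> w = 0" "\<forall>w\<in>S. (x - y2) \<bullet> w = 0"
  shows "y1 = y2"
proof -
  have "y1 - y2 \<in> S" using assms by (simp add: subspace_diff)
  moreover have "(y1 - y2) \<bullet> (y1 - y2) = (x - y2) \<bullet> (y1 - y2) - (x - y1) \<bullet> (y1 - y2)"
    by (simp add: inner_diff_left)
  ultimately show ?thesis using assms by simp
qed

lemma orth_proj_point_exists:
  fixes S :: "(real^'n) set"
  assumes "subspace S"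
  shows "\<exists>y\<in>S. \<forall>w\<in>S. (x - y) \<bullet> w = 0"
proof -
  obtain y z where "y \<in> span S" "\<And>w. w \<in> span S \<Longrightarrow> orthogonal z w" "x = y + z"
    using orthogonal_subspace_decomp_exists by blast
  then show ?thesis
    using assms by (metis add_diff_cancel_left' orthogonal_def span_eq_iff)
qed

lemma is_orth_proj_exists:
  fixes S :: "(real^'n) set"
  assumes S: "subspace S"
  shows "\<exists>P. is_orth_proj S P"
proof -
  define p where "p x = (SOME y. y \<in> S \<and> (\<forall>w\<in>S. (x - y) \<bullet> w = 0))" for x
  have p: "p x \<in> S" "\<forall>w\<in>S. (x - p x) \<bullet> w = 0" for x
    unfolding p_def using someI_ex[OF orth_proj_point_exists[OF S, of x, unfolded Bex_def]]
    by blast+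
  have "linear p"
  proof
    fix a b
    have "(a + b - (p a + p b)) \<bullet> w = (a - p a) \<bullet> w + (b - p b) \<bullet> w" for w
      by (simp add: inner_diff_left inner_add_left)
    then have "\<forall>w\<in>S. (a + b - (p a + p b)) \<bullet> w = 0"
      using p by simp
    then show "p (a + b) = p a + p b"
      using orth_proj_point_unique[OF S] p S by (meson subspace_add)
  next
    fix c :: real and a
    have "\<forall>w\<in>S. (c *\<^sub>R a - c *\<^sub>R p a) \<bullet> w = 0"
      using p by (simp flip: scaleR_diff_right)
    then show "p (c *\<^sub>R a) = c *\<^sub>R p a"
      using orth_proj_point_unique[OF S] p S by (meson subspace_scale)
  qed
  then have "matrix p *v x = p x" for x
    by (simp add: matrix_works linear_matrix_vector_mul_eq)
  then have "is_orth_proj S (matrix p)"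
    unfolding is_orth_proj_def using p by simp
  then show ?thesis by blast
qed

lemma is_orth_proj_unique:
  assumes "subspace S" "is_orth_proj S P1" "is_orth_proj S P2"
  shows "P1 = P2"
  unfolding matrix_eq using assms orth_proj_point_unique unfolding is_orth_proj_def by blast

lemma is_orth_proj_orth_proj_matrix:
  assumes S: "subspace S"
  shows "is_orth_proj S (orth_proj_matrix S)"
proof -
  have "\<exists>!P. is_orth_proj S P"
    using is_orth_proj_exists[OF S] is_orth_proj_unique[OF S] by blast
  then show ?thesis
    unfolding orth_proj_matrix_def is_orth_proj_def[symmetric] by (rule theI')
qed

lemma orth_proj_matrix_in:
  "subspace S \<Longrightarrow> orth_proj_matrix S *v x \<in> S"
  using is_orth_proj_orth_proj_matrix unfolding is_orth_proj_def by blast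

lemma orth_proj_matrix_orthogonal:
  "subspace S \<Longrightarrow> y \<in> S \<Longrightarrow> (x - orth_proj_matrix S *v x) \<bullet> y = 0"
  using is_orth_proj_orth_proj_matrix unfolding is_orth_proj_def by blast

lemma orth_proj_matrix_fixes:
  "subspace S \<Longrightarrow> x \<in> S \<Longrightarrow> orth_proj_matrix S *v x = x"
  by (rule orth_proj_point_unique[of S _ x x]) (simp_all add: orth_proj_matrix_in orth_proj_matrix_orthogonal)

lemma orth_proj_matrix_idempotent:
  "subspace S \<Longrightarrow> orth_proj_matrix S ** orth_proj_matrix S = orth_proj_matrix S"
  unfolding matrix_eq matrix_vector_mul_assoc[symmetric]
  by (simp add: orth_proj_matrix_fixes orth_proj_matrix_in)

lemma transpose_orth_proj_matrix:
  assumes S: "subspace S"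
  shows "transpose (orth_proj_matrix S) = orth_proj_matrix S"
proof -
  let ?P = "orth_proj_matrix S"
  have self_adjoint: "(?P *v x) \<bullet> y = (?P *v x) \<bullet> (?P *v y)" for x y
  proof -
    have "(?P *v x) \<bullet> y = (?P *v x) \<bullet> (?P *v y) + (y - ?P *v y) \<bullet> (?P *v x)"
      by (simp add: inner_diff inner_commute)
    then show ?thesis by (simp add: S orth_proj_matrix_in orth_proj_matrix_orthogonal)
  qed
  have "(transpose ?P *v y) \<bullet> x = (?P *v y) \<bullet> x" for x y
  proof -
    have "(transpose ?P *v y) \<bullet> x = y \<bullet> (?P *v x)" by (rule transpose_matrix_vector_mul_inner)
    also have "\<dots> = (?P *v y) \<bullet> x"
      using self_adjoint[of x y] self_adjoint[of y x] by (simp add: inner_commute)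
    finally show ?thesis .
  qed
  then have "(transpose ?P *v y - ?P *v y) \<bullet> (transpose ?P *v y - ?P *v y) = 0" for y
    by (simp only: inner_diff_left)
  then show ?thesis by (simp add: matrix_eq)
qed

lemma orth_proj_matrix_col_space_mult:
  "orth_proj_matrix (col_space M) ** M = M"
  unfolding matrix_eq matrix_vector_mul_assoc[symmetric]
  using orth_proj_matrix_fixes[OF subspace_col_space] unfolding col_space_def by blast

lemma mult_orth_proj_matrix_col_space_transpose:
  "M ** orth_proj_matrix (col_space (transpose M)) = M"
  by (metis orth_proj_matrix_col_space_mult matrix_transpose_mul subspace_col_space
      transpose_orth_proj_matrix transpose_transpose)

lemma is_mp_inverse_unique:
  assumes A: "is_mp_inverse M G1" and B: "is_mp_inverse M G2"
  shows "G1 = G2"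
proof -
  have a: "M ** G1 ** M = M" "G1 ** M ** G1 = G1" "transpose (M ** G1) = M ** G1"
      "transpose (G1 ** M) = G1 ** M" using A unfolding is_mp_inverse_def by auto
  have b: "M ** G2 ** M = M" "G2 ** M ** G2 = G2" "transpose (M ** G2) = M ** G2"
      "transpose (G2 ** M) = G2 ** M" using B unfolding is_mp_inverse_def by auto
  have MG: "M ** G1 = M ** G2"
  proof -
    have "M ** G1 = transpose ((M ** G2) ** (M ** G1))" by (metis a(3) b(1) matrix_mul_assoc)
    also have "\<dots> = transpose (M ** G1) ** transpose (M ** G2)" by (rule matrix_transpose_mul)
    also have "\<dots> = M ** G2" by (metis a(1) a(3) b(3) matrix_mul_assoc)
    finally show ?thesis .
  qed
  have GM: "G1 ** M = G2 ** M"
  proof -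
    have "G2 ** M = transpose ((G2 ** M) ** (G1 ** M))" by (metis b(4) a(1) matrix_mul_assoc)
    also have "\<dots> = transpose (G1 ** M) ** transpose (G2 ** M)" by (rule matrix_transpose_mul)
    also have "\<dots> = G1 ** M" by (metis a(4) b(1) b(4) matrix_mul_assoc)
    finally show ?thesis by simp
  qed
  have "G1 = G1 ** M ** G1" using a(2) by simp
  also have "\<dots> = G2 ** M ** G2" by (metis GM MG matrix_mul_assoc)
  finally show ?thesis using b(2) by simp
qed

lemma generalized_inverse_mult_eq_orth_proj_matrix:
  assumes "M ** G ** M = M" and "G ** orth_proj_matrix (col_space M) = G"
  shows "M ** G = orth_proj_matrix (col_space M)"
proof -
  let ?P = "orth_proj_matrix (col_space M)"
  have "M ** G *v (?P *v x) = ?P *v x" for x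
  proof -
    obtain w where "?P *v x = M *v w"
      using orth_proj_matrix_in[OF subspace_col_space] unfolding col_space_def by blast
    then show ?thesis by (simp add: matrix_vector_mul_assoc assms(1))
  qed
  then have "M ** G ** ?P = ?P"
    unfolding matrix_eq by (simp flip: matrix_vector_mul_assoc)
  then show ?thesis by (metis assms(2) matrix_mul_assoc)
qed

lemma is_mp_inverseI:
  assumes MGM: "M ** G ** M = M"
    and GP: "G ** orth_proj_matrix (col_space M) = G"
    and PG: "orth_proj_matrix (col_space (transpose M)) ** G = G"
  shows "is_mp_inverse M G"
proof -
  have MG: "M ** G = orth_proj_matrix (col_space M)"
    using generalized_inverse_mult_eq_orth_proj_matrix[OF MGM GP] .
  have "transpose M ** transpose G ** transpose M = transpose M"
    by (metis MGM matrix_transpose_mul matrix_mul_assoc)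
  moreover have "transpose G ** orth_proj_matrix (col_space (transpose M)) = transpose G"
    by (metis PG matrix_transpose_mul transpose_orth_proj_matrix subspace_col_space)
  ultimately have "transpose M ** transpose G = orth_proj_matrix (col_space (transpose M))"
    by (rule generalized_inverse_mult_eq_orth_proj_matrix)
  then have GM: "G ** M = orth_proj_matrix (col_space (transpose M))"
    by (metis matrix_transpose_mul transpose_orth_proj_matrix subspace_col_space
        transpose_transpose)
  show ?thesis
    unfolding is_mp_inverse_def
    using MGM PG by (simp add: MG GM transpose_orth_proj_matrix subspace_col_space)
qed

lemma inj_on_col_space_transpose:
  fixes M :: "real^'n^'m"
  shows "inj_on ((*v) M) (col_space (transpose M))"
proof (rule inj_onI)
  fix a b assume ab: "a \<in> col_space (transpose M)" "b \<in> col_space (transpose M)" "M *v a = M *v b"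
  have "a - b \<in> col_space (transpose M)" by (meson ab(1,2) subspace_col_space subspace_diff)
  then obtain u where u: "a - b = transpose M *v u" unfolding col_space_def by blast
  have "(a - b) \<bullet> (a - b) = u \<bullet> (M *v (a - b))" by (metis u transpose_matrix_vector_mul_inner)
  also have "\<dots> = 0" using ab by (simp add: matrix_vector_mult_diff_distrib)
  finally show "a = b" by simp
qed

lemma is_mp_inverse_exists:
  fixes M :: "real^'n^'m"
  shows "\<exists>G. is_mp_inverse M G"
proof -
  let ?PQ = "orth_proj_matrix (col_space M)"
  let ?PR = "orth_proj_matrix (col_space (transpose M))"
  obtain g where "linear g" and g: "\<forall>v\<in>col_space (transpose M). g (M *v v) = v"
    using linear_exists_left_inverse_on[OF _ subspace_col_space[of "transpose M"]
        inj_on_col_space_transpose]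
    by auto
  then have "matrix g *v y = g y" for y
    by (simp add: matrix_works linear_matrix_vector_mul_eq)
  then have LMP: "matrix g ** M ** ?PR = ?PR"
    unfolding matrix_eq
    by (simp add: g orth_proj_matrix_in subspace_col_space flip: matrix_vector_mul_assoc)
  define G where "G = ?PR ** matrix g ** ?PQ"
  have "M ** G ** M = (M ** ?PR) ** matrix g ** (?PQ ** M)"
    unfolding G_def by (simp add: matrix_mul_assoc)
  also have "\<dots> = M ** matrix g ** (M ** ?PR)"
    by (simp add: orth_proj_matrix_col_space_mult mult_orth_proj_matrix_col_space_transpose)
  also have "\<dots> = M ** ?PR"
    by (metis LMP matrix_mul_assoc)
  finally have "M ** G ** M = M"
    by (simp add: mult_orth_proj_matrix_col_space_transpose)
  moreover have "G ** ?PQ = G" "?PR ** G = G"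
    unfolding G_def by (metis orth_proj_matrix_idempotent subspace_col_space matrix_mul_assoc)+
  ultimately show ?thesis using is_mp_inverseI by blast
qed

lemma mp_pinv_eqI:
  assumes "is_mp_inverse M G"
  shows "mp_pinv M = G"
  unfolding mp_pinv_def using assms is_mp_inverse_unique by blast

lemma is_mp_inverse_mp_pinv: "is_mp_inverse M (mp_pinv M)"
  using is_mp_inverse_exists mp_pinv_eqI by metis

theorem mainTheorem18:
  fixes X C :: "real^'n^'n"
  assumes "invertible X"
    and "transpose C = C"
  shows "mp_pinv (X ** C ** transpose X) =
           orth_proj_matrix (col_space (X ** C ** transpose X))
           ** transpose (matrix_inv X) ** mp_pinv C ** matrix_inv X
           ** orth_proj_matrix (col_space (X ** C ** transpose X))"
proof -
  define B where "B = X ** C ** transpose X"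
  define P where "P = orth_proj_matrix (col_space B)"
  define G where "G = P ** transpose (matrix_inv X) ** mp_pinv C ** matrix_inv X ** P"
  have BT: "transpose B = B"
    unfolding B_def by (simp add: matrix_transpose_mul assms(2) matrix_mul_assoc)
  have PB: "P ** B = B" and BP: "B ** P = B"
    unfolding P_def using orth_proj_matrix_col_space_mult
      mult_orth_proj_matrix_col_space_transpose[of B] BT by simp_all
  have PP: "P ** P = P"
    unfolding P_def by (simp add: orth_proj_matrix_idempotent subspace_col_space)
  have XXi: "transpose X ** transpose (matrix_inv X) = mat 1"
    by (metis invertible_matrix_inv(2)[OF assms(1)] matrix_transpose_mul transpose_mat)
  have BXi: "B ** transpose (matrix_inv X) = X ** C"
    unfolding B_def by (simp add: XXi flip: matrix_mul_assoc)
  have XiB: "matrix_inv X ** B = C ** transpose X"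
    unfolding B_def by (simp add: invertible_matrix_inv(2)[OF assms(1)] matrix_mul_assoc)
  have "B ** G ** B = (B ** P) ** transpose (matrix_inv X) ** mp_pinv C ** matrix_inv X ** (P ** B)"
    unfolding G_def by (simp add: matrix_mul_assoc)
  also have "\<dots> = (B ** transpose (matrix_inv X)) ** mp_pinv C ** (matrix_inv X ** B)"
    unfolding BP PB by (simp add: matrix_mul_assoc)
  also have "\<dots> = X ** (C ** mp_pinv C ** C) ** transpose X"
    unfolding BXi XiB by (simp add: matrix_mul_assoc)
  also have "\<dots> = B"
    using is_mp_inverse_mp_pinv[of C] unfolding is_mp_inverse_def B_def by simp
  finally have "B ** G ** B = B" .
  moreover have "G ** P = G"
    unfolding G_def by (simp add: PP flip: matrix_mul_assoc)
  moreover have "P ** G = G"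
    unfolding G_def by (simp add: PP matrix_mul_assoc)
  ultimately have "is_mp_inverse B G"
    using is_mp_inverseI[of B G] BT unfolding P_def by simp
  then show ?thesis
    unfolding G_def P_def B_def by (rule mp_pinv_eqI)
qed

end
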